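(* Let $\Phi$ be a real $N\times d$ matrix satisfying the Restricted Isometry Condition with parameters $(2n,\varepsilon)$, $\varepsilon = 0.03/\sqrt{\log n}$, let $v \ne 0$ be $n$-sparse, $x = \Phi v$, and consider an iteration of ROMP run on $x$ with sparsity level $n$, with $I$ the index set and $r\neq 0$ the residual at the start of that iteration. Let $v_0 = v|_{\mathrm{supp}(v)\setminus I}$ (the vector equal to $v$ on $\mathrm{supp}(v)\setminus I$ and $0$ elsewhere) and $x_0 = \Phi v_0$. Then $\|x_0 - r\|_2 \le 2.2\,\varepsilon\,\|x_0\|_2$.
   Context: A vector is $n$-sparse if it has at most $n$ nonzero coordinates. $\Phi$ satisfies the Restricted Isometry Condition with parameters $(m,\varepsilon)$ if $(1-\varepsilon)\|w\|_2 \le \|\Phi w\|_2 \le (1+\varepsilon)\|w\|_2$ for all $m$-sparse $w$. $y|_T$ is the restriction of $y$ to coordinates in $T$. ROMP with input $x$ and sparsity level $n$: Initialize $I=\emptyset$, $r=x$. Repeat until $r=0$: (Identify) $u=\Phi^*r$, choose a set $J$ of the $n$ biggest coordinates of $u$ in magnitude, or all nonzero coordinates of $u$, whichever set is smaller; (Regularize) among subsets $J_0\subset J$ with $|u(i)|\le 2|u(j)|$ for all $i,j\in J_0$, choose one maximizing $\|u|_{J_0}\|_2$; (Update) $I\leftarrow I\cup J_0$, $y=\operatorname{argmin}_{z\in\mathbb{R}^I}\|x-\Phi z\|_2$, $r=x-\Phi y$. Output $I$. *)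

theory Defs
  imports "HOL-Analysis.Analysis"
begin

definition supp :: "real ^ 'd \<Rightarrow> 'd set" where
  "supp w = {i. w $ i \<noteq> 0}"

definition sparse :: "nat \<Rightarrow> real ^ 'd \<Rightarrow> bool" where
  "sparse n w \<longleftrightarrow> card (supp w) \<le> n"

definition RIC :: "real ^ 'd ^ 'N \<Rightarrow> nat \<Rightarrow> real \<Rightarrow> bool" where
  "RIC Phi m eps \<longleftrightarrow>
     (\<forall>w. sparse m w \<longrightarrow>
        (1 - eps) * norm w \<le> norm (Phi *v w) \<and> norm (Phi *v w) \<le> (1 + eps) * norm w)"

definition restrict_vec :: "real ^ 'd \<Rightarrow> 'd set \<Rightarrow> real ^ 'd" where
  "restrict_vec y T = (\<chi> i. if i \<in> T then y $ i else 0)"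

definition romp_identify :: "nat \<Rightarrow> real ^ 'd \<Rightarrow> 'd set \<Rightarrow> bool" where
  "romp_identify n u J \<longleftrightarrow>
     (if card (supp u) \<le> n then J = supp u
      else card J = n \<and> (\<forall>i\<in>J. \<forall>j. j \<notin> J \<longrightarrow> \<bar>u $ j\<bar> \<le> \<bar>u $ i\<bar>))"

definition comparable :: "real ^ 'd \<Rightarrow> 'd set \<Rightarrow> bool" where
  "comparable u J0 \<longleftrightarrow> (\<forall>i\<in>J0. \<forall>j\<in>J0. \<bar>u $ i\<bar> \<le> 2 * \<bar>u $ j\<bar>)"

definition romp_regularize :: "real ^ 'd \<Rightarrow> 'd set \<Rightarrow> 'd set \<Rightarrow> bool" where
  "romp_regularize u J J0 \<longleftrightarrow>
     J0 \<subseteq> J \<and> comparable u J0 \<and>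
     (\<forall>J1. J1 \<subseteq> J \<and> comparable u J1 \<longrightarrow>
        norm (restrict_vec u J1) \<le> norm (restrict_vec u J0))"

definition lsq_on :: "real ^ 'd ^ 'N \<Rightarrow> real ^ 'N \<Rightarrow> 'd set \<Rightarrow> real ^ 'd \<Rightarrow> bool" where
  "lsq_on Phi x I y \<longleftrightarrow>
     supp y \<subseteq> I \<and> (\<forall>z. supp z \<subseteq> I \<longrightarrow> norm (x - Phi *v y) \<le> norm (x - Phi *v z))"

text \<open>States (I, r) = (index set, residual) reached at the start of some iteration of
  ROMP run on input x with sparsity level n.\<close>
inductive romp_state :: "real ^ 'd ^ 'N \<Rightarrow> real ^ 'N \<Rightarrow> nat \<Rightarrow> 'd set \<Rightarrow> real ^ 'N \<Rightarrow> bool"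
  for Phi :: "real ^ 'd ^ 'N" and x :: "real ^ 'N" and n :: nat where
  init: "romp_state Phi x n {} x"
| step: "\<lbrakk> romp_state Phi x n I r; r \<noteq> 0;
           romp_identify n (transpose Phi *v r) J;
           romp_regularize (transpose Phi *v r) J J0;
           lsq_on Phi x (I \<union> J0) y \<rbrakk>
         \<Longrightarrow> romp_state Phi x n (I \<union> J0) (x - Phi *v y)"

end

theory Submission
  imports Defs "HOL-Analysis.Harmonic_Numbers" "HOL-Library.Discrete_Functions"
begin

text \<open>Write \<open>r = \<Phi> v - \<Phi> y\<close> with \<open>y\<close> supported on \<open>I\<close>. As a least-squares residual, \<open>r\<close> is
  orthogonal to \<open>\<Phi> z\<close> for every \<open>z\<close> supported on \<open>I\<close>, so \<open>x0 - r = \<Phi> w\<close> with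
  \<open>w = y - v|\<^sub>I\<close> supported on \<open>I\<close> and \<open>\<parallel>\<Phi> w\<parallel>\<^sup>2 = \<langle>\<Phi> v0, \<Phi> w\<rangle>\<close>. Since \<open>v0\<close> and \<open>w\<close> have
  disjoint supports, the restricted isometry bounds this by
  \<open>\<delta> \<parallel>v0\<parallel> \<parallel>w\<parallel> \<le> \<delta> / (1 - \<epsilon>)\<^sup>2 \<parallel>\<Phi> v0\<parallel> \<parallel>\<Phi> w\<parallel>\<close> with \<open>\<delta> = 2\<epsilon> + \<epsilon>\<^sup>2\<close>, and \<open>\<delta> / (1 - \<epsilon>)\<^sup>2 \<le> 2.2 \<epsilon>\<close>.

  This needs \<open>v0\<close> and \<open>w\<close> to live on at most \<open>2n\<close> coordinates, i.e. \<open>\<bar>I \<union> supp v\<bar> \<le> 2n\<close>.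
  That is an invariant of ROMP: by the same estimate at the earlier iterations, \<open>\<Phi>\<^sup>* r\<close> is
  close to \<open>v0\<close> on every set of \<open>n\<close> coordinates, so each newly selected set \<open>J0\<close> avoids \<open>I\<close>,
  and since regularization keeps a \<open>1 / log n\<close> fraction of the energy of \<open>J\<close>, at least half
  of \<open>J0\<close> lies in \<open>supp v\<close>.\<close>

lemma restrict_vec_nth [simp]: "restrict_vec y T $ i = (if i \<in> T then y $ i else 0)"
  by (simp add: restrict_vec_def)

lemma supp_restrict_vec: "supp (restrict_vec y T) \<subseteq> T"
  by (auto simp: supp_def)

lemma supp_add: "supp (a + b) \<subseteq> supp a \<union> supp b"
  by (auto simp: supp_def)

lemma supp_diff: "supp (a - b) \<subseteq> supp a \<union> supp b"
  by (auto simp: supp_def)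

lemma supp_scaleR: "supp (c *\<^sub>R w) \<subseteq> supp w"
  by (auto simp: supp_def)

lemma supp_eq_empty_iff [simp]: "supp w = {} \<longleftrightarrow> w = 0"
  by (auto simp: supp_def vec_eq_iff)

lemma sparse_if_supp_subset: "supp w \<subseteq> S \<Longrightarrow> card S \<le> m \<Longrightarrow> sparse m w"
  unfolding sparse_def by (meson card_mono finite order_trans)

lemma inner_eq_0_if_disjoint_supp: "supp a \<inter> supp b = {} \<Longrightarrow> inner a b = 0"
  unfolding inner_vec_def by (rule sum.neutral) (auto simp: supp_def)

lemma norm_restrict_vec_sq: "(norm (restrict_vec y T))\<^sup>2 = (\<Sum>i\<in>T. (y $ i)\<^sup>2)"
proof -
  have "(norm (restrict_vec y T))\<^sup>2 = (\<Sum>i\<in>UNIV. if i \<in> T then (y $ i)\<^sup>2 else 0)"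
    unfolding power2_norm_eq_inner inner_vec_def by (rule sum.cong) (auto simp: power2_eq_square)
  then show ?thesis
    by (simp add: sum.If_cases)
qed

lemma inner_restrict_vec: "inner y (restrict_vec y T) = (norm (restrict_vec y T))\<^sup>2"
proof -
  have "inner y (restrict_vec y T) = (\<Sum>i\<in>UNIV. if i \<in> T then (y $ i)\<^sup>2 else 0)"
    unfolding inner_vec_def by (rule sum.cong) (auto simp: power2_eq_square)
  then show ?thesis
    by (simp add: sum.If_cases norm_restrict_vec_sq)
qed

lemma le_if_square_le_mult: "x\<^sup>2 \<le> c * x \<Longrightarrow> 0 \<le> x \<Longrightarrow> 0 \<le> c \<Longrightarrow> (x::real) \<le> c"
  by (cases "x = 0") (auto simp: power2_eq_square)

text \<open>Squaring the bounds \<open>1 \<plusminus> \<epsilon>\<close> of the Restricted Isometry Condition gives the restricted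
  isometry property with constant \<open>\<delta> = 2\<epsilon> + \<epsilon>\<^sup>2\<close>.\<close>
definition ric_delta :: "real \<Rightarrow> real" where
  "ric_delta e = 2 * e + e\<^sup>2"

lemma ric_delta_nonneg: "0 \<le> e \<Longrightarrow> 0 \<le> ric_delta e"
  by (simp add: ric_delta_def)

lemma RIC_norm_sq:
  assumes "RIC Phi m e" "e \<le> 1" "sparse m w"
  shows "\<bar>(norm (Phi *v w))\<^sup>2 - (norm w)\<^sup>2\<bar> \<le> ric_delta e * (norm w)\<^sup>2"
proof -
  have "(1 - e) * norm w \<le> norm (Phi *v w)" "norm (Phi *v w) \<le> (1 + e) * norm w"
    using assms unfolding RIC_def by auto
  then have "((1 - e) * norm w)\<^sup>2 \<le> (norm (Phi *v w))\<^sup>2" "(norm (Phi *v w))\<^sup>2 \<le> ((1 + e) * norm w)\<^sup>2"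
    using assms(2) by (auto intro: power_mono)
  moreover have "0 \<le> e\<^sup>2 * (norm w)\<^sup>2"
    by simp
  ultimately show ?thesis
    unfolding abs_le_iff ric_delta_def by (simp add: power2_eq_square algebra_simps)
qed

lemma RIC_inner_le_half_sum:
  assumes "RIC Phi m e" "e \<le> 1" "card (supp a \<union> supp b) \<le> m"
  shows "\<bar>inner (Phi *v a) (Phi *v b) - inner a b\<bar> \<le> ric_delta e / 2 * ((norm a)\<^sup>2 + (norm b)\<^sup>2)"
proof -
  have polar: "4 * inner p q = (norm (p + q))\<^sup>2 - (norm (p - q))\<^sup>2" for p q :: "'v::real_inner"
    by (simp add: power2_norm_eq_inner inner_add inner_diff inner_commute algebra_simps)
  have "sparse m (a + b)" "sparse m (a - b)"
    using sparse_if_supp_subset[OF supp_add assms(3)] sparse_if_supp_subset[OF supp_diff assms(3)] .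
  from this[THEN RIC_norm_sq[OF assms(1,2)]]
  have "\<bar>(norm (Phi *v a + Phi *v b))\<^sup>2 - (norm (a + b))\<^sup>2\<bar> \<le> ric_delta e * (norm (a + b))\<^sup>2"
    "\<bar>(norm (Phi *v a - Phi *v b))\<^sup>2 - (norm (a - b))\<^sup>2\<bar> \<le> ric_delta e * (norm (a - b))\<^sup>2"
    by (simp_all add: matrix_vector_right_distrib matrix_vector_mult_diff_distrib)
  moreover note polar[of "Phi *v a" "Phi *v b"] polar[of a b]
  moreover have "ric_delta e * (norm (a + b))\<^sup>2 + ric_delta e * (norm (a - b))\<^sup>2
      = 4 * (ric_delta e / 2 * ((norm a)\<^sup>2 + (norm b)\<^sup>2))"
    by (simp add: power2_norm_eq_inner inner_add inner_diff inner_commute algebra_simps)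
  ultimately show ?thesis
    unfolding abs_le_iff by - (intro conjI; linarith)
qed

lemma RIC_inner:
  assumes "RIC Phi m e" "e \<le> 1" "card (supp a \<union> supp b) \<le> m"
  shows "\<bar>inner (Phi *v a) (Phi *v b) - inner a b\<bar> \<le> ric_delta e * norm a * norm b"
proof (cases "a = 0 \<or> b = 0")
  case True
  then show ?thesis by auto
next
  case False
  define a' where "a' = (1 / norm a) *\<^sub>R a"
  define b' where "b' = (1 / norm b) *\<^sub>R b"
  have "card (supp a' \<union> supp b') \<le> m"
    using assms(3) supp_scaleR[of _ a] supp_scaleR[of _ b] unfolding a'_def b'_def
    by (meson Un_mono card_mono finite order_trans)
  from RIC_inner_le_half_sum[OF assms(1,2) this]
  have "\<bar>inner (Phi *v a') (Phi *v b') - inner a' b'\<bar> \<le> ric_delta e"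
    using False by (simp add: a'_def b'_def)
  moreover have "inner (Phi *v a') (Phi *v b') - inner a' b'
      = (inner (Phi *v a) (Phi *v b) - inner a b) / (norm a * norm b)"
    by (simp add: a'_def b'_def matrix_vector_mult_scaleR diff_divide_distrib ac_simps)
  ultimately show ?thesis
    using False by (simp add: abs_div divide_le_eq mult.assoc)
qed

lemma RIC_restrict_transpose:
  assumes "RIC Phi m e" "0 \<le> e" "card T \<le> m"
  shows "norm (restrict_vec (transpose Phi *v q) T) \<le> (1 + e) * norm q"
proof -
  define z where "z = restrict_vec (transpose Phi *v q) T"
  have "sparse m z"
    unfolding z_def by (rule sparse_if_supp_subset[OF supp_restrict_vec assms(3)])
  then have "norm (Phi *v z) \<le> (1 + e) * norm z"
    using assms(1) unfolding RIC_def by blast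
  have "(norm z)\<^sup>2 = inner (transpose Phi *v q) z"
    unfolding z_def by (rule inner_restrict_vec[symmetric])
  also have "\<dots> = inner q (Phi *v z)"
    by (simp add: dot_lmul_matrix)
  also have "\<dots> \<le> norm q * norm (Phi *v z)"
    by (rule norm_cauchy_schwarz)
  also have "\<dots> \<le> norm q * ((1 + e) * norm z)"
    using \<open>norm (Phi *v z) \<le> (1 + e) * norm z\<close> by (rule mult_left_mono) simp
  finally have "(norm z)\<^sup>2 \<le> ((1 + e) * norm q) * norm z"
    by (simp add: mult_ac)
  then show ?thesis
    unfolding z_def[symmetric] by (rule le_if_square_le_mult) (use assms(2) in auto)
qed

lemma RIC_restrict_gram:
  assumes "RIC Phi m e" "0 \<le> e" "e \<le> 1" "card (T \<union> supp a) \<le> m"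
  shows "norm (restrict_vec (transpose Phi *v (Phi *v a) - a) T) \<le> ric_delta e * norm a"
proof -
  define z where "z = restrict_vec (transpose Phi *v (Phi *v a) - a) T"
  have "supp a \<union> supp z \<subseteq> T \<union> supp a"
    using supp_restrict_vec unfolding z_def by blast
  then have "card (supp a \<union> supp z) \<le> m"
    using assms(4) card_mono[OF finite] order_trans by blast
  from RIC_inner[OF assms(1,3) this]
  have "inner (Phi *v a) (Phi *v z) - inner a z \<le> ric_delta e * norm a * norm z"
    by simp
  moreover have "(norm z)\<^sup>2 = inner (transpose Phi *v (Phi *v a) - a) z"
    unfolding z_def by (rule inner_restrict_vec[symmetric])
  then have "(norm z)\<^sup>2 = inner (Phi *v a) (Phi *v z) - inner a z"
    by (simp add: inner_diff_left dot_lmul_matrix)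
  ultimately have "(norm z)\<^sup>2 \<le> (ric_delta e * norm a) * norm z"
    by simp
  then show ?thesis
    unfolding z_def[symmetric] by (rule le_if_square_le_mult) (use assms(2) in \<open>auto simp: ric_delta_nonneg\<close>)
qed

lemma RIC_norm_mult_le:
  assumes "RIC Phi m e" "e < 1" "sparse m a" "sparse m b"
  shows "norm a * norm b \<le> norm (Phi *v a) * norm (Phi *v b) / (1 - e)\<^sup>2"
proof -
  have "(1 - e) * norm a \<le> norm (Phi *v a)" "(1 - e) * norm b \<le> norm (Phi *v b)"
    using assms unfolding RIC_def by blast+
  then have "((1 - e) * norm a) * ((1 - e) * norm b) \<le> norm (Phi *v a) * norm (Phi *v b)"
    using assms(2) by (intro mult_mono) auto
  then have "(1 - e)\<^sup>2 * (norm a * norm b) \<le> norm (Phi *v a) * norm (Phi *v b)"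
    by (simp add: power2_eq_square mult_ac)
  then show ?thesis
    using assms(2) by (simp add: le_divide_eq mult.commute)
qed

definition is_lsq_residual :: "real ^ 'd ^ 'N \<Rightarrow> real ^ 'N \<Rightarrow> 'd set \<Rightarrow> real ^ 'N \<Rightarrow> bool" where
  "is_lsq_residual Phi x I r \<longleftrightarrow>
     (\<exists>y. supp y \<subseteq> I \<and> r = x - Phi *v y) \<and> (\<forall>z. supp z \<subseteq> I \<longrightarrow> inner r (Phi *v z) = 0)"

lemma lsq_on_residual_orthogonal:
  assumes "lsq_on Phi x I y" "supp z \<subseteq> I"
  shows "inner (x - Phi *v y) (Phi *v z) = 0"
proof (rule ccontr)
  define r where "r = x - Phi *v y"
  define p where "p = Phi *v z"
  assume "inner (x - Phi *v y) (Phi *v z) \<noteq> 0"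
  then have c: "inner r p \<noteq> 0"
    by (simp add: r_def p_def)
  then have "p \<noteq> 0"
    by auto
  define t where "t = inner r p / (norm p)\<^sup>2"
  \<comment> \<open>the step \<open>y + t z\<close> with this \<open>t\<close> would strictly decrease the residual\<close>
  have "supp (y + t *\<^sub>R z) \<subseteq> I"
    using assms supp_add[of y "t *\<^sub>R z"] supp_scaleR[of t z] unfolding lsq_on_def by blast
  then have "norm r \<le> norm (x - Phi *v (y + t *\<^sub>R z))"
    using assms(1) unfolding lsq_on_def r_def by blast
  also have "x - Phi *v (y + t *\<^sub>R z) = r - t *\<^sub>R p"
    by (simp add: r_def p_def matrix_vector_right_distrib matrix_vector_mult_scaleR)
  finally have "norm r \<le> norm (r - t *\<^sub>R p)" .
  then have "(norm r)\<^sup>2 \<le> (norm (r - t *\<^sub>R p))\<^sup>2"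
    by (simp add: power_mono)
  also have "\<dots> = (norm r)\<^sup>2 - (inner r p)\<^sup>2 / (norm p)\<^sup>2"
    using \<open>p \<noteq> 0\<close> unfolding t_def power2_norm_eq_inner
    by (simp add: inner_diff inner_commute power2_eq_square field_simps)
  finally show False
    using c \<open>p \<noteq> 0\<close> by (simp add: divide_le_0_iff)
qed

lemma romp_state_residual:
  "romp_state Phi x n I r \<Longrightarrow> is_lsq_residual Phi x I r"
proof (induction rule: romp_state.induct)
  case init
  show ?case
    by (auto simp: is_lsq_residual_def intro!: exI[of _ 0])
next
  case (step I r J J0 y)
  then show ?case
    using lsq_on_residual_orthogonal[OF step(5)] unfolding is_lsq_residual_def lsq_on_def by blast
qed

lemma is_lsq_residual_correlation_vanishes:
  assumes "is_lsq_residual Phi x I r" "i \<in> I"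
  shows "(transpose Phi *v r) $ i = 0"
proof -
  have "supp (axis i (1::real)) \<subseteq> I"
    using assms(2) by (auto simp: supp_def axis_def)
  then have "inner r (Phi *v axis i 1) = 0"
    using assms(1) unfolding is_lsq_residual_def by blast
  then show ?thesis
    by (simp add: inner_axis flip: dot_lmul_matrix)
qed

lemma residual_approx:
  assumes ric: "RIC Phi m e" and e: "0 \<le> e" "e < 1"
    and res: "is_lsq_residual Phi (Phi *v v) I r" and card: "card (I \<union> supp v) \<le> m"
  defines "v0 \<equiv> restrict_vec v (supp v - I)"
  shows "norm (Phi *v v0 - r) \<le> ric_delta e / (1 - e)\<^sup>2 * norm (Phi *v v0)"
proof -
  obtain y where y: "supp y \<subseteq> I" "r = Phi *v v - Phi *v y"
    and orth: "\<And>z. supp z \<subseteq> I \<Longrightarrow> inner r (Phi *v z) = 0"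
    using res unfolding is_lsq_residual_def by blast
  define w where "w = y - restrict_vec v I"
  have "restrict_vec v I + v0 = v"
    by (auto simp: vec_eq_iff v0_def supp_def)
  then have "Phi *v v = Phi *v restrict_vec v I + Phi *v v0"
    by (metis matrix_vector_right_distrib)
  then have diff: "Phi *v v0 - r = Phi *v w"
    unfolding y(2) w_def by (simp add: matrix_vector_mult_diff_distrib)
  have supp_w: "supp w \<subseteq> I"
    using y(1) supp_diff[of y "restrict_vec v I"] supp_restrict_vec[of v I] unfolding w_def by blast
  have supp_v0: "supp v0 \<subseteq> supp v - I"
    unfolding v0_def by (rule supp_restrict_vec)
  have "(norm (Phi *v w))\<^sup>2 = inner (Phi *v v0) (Phi *v w)"
    using orth[OF supp_w] unfolding diff[symmetric] power2_norm_eq_inner by (simp add: inner_diff_left)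
  also have "\<dots> \<le> ric_delta e * norm v0 * norm w"
  proof -
    have "supp v0 \<union> supp w \<subseteq> I \<union> supp v"
      using supp_w supp_v0 by blast
    then have "card (supp v0 \<union> supp w) \<le> m"
      using card card_mono[OF finite] order_trans by blast
    moreover have "inner v0 w = 0"
      using supp_w supp_v0 by (intro inner_eq_0_if_disjoint_supp) blast
    ultimately show ?thesis
      using RIC_inner[OF ric _ ] e by fastforce
  qed
  also have "\<dots> \<le> ric_delta e / (1 - e)\<^sup>2 * norm (Phi *v v0) * norm (Phi *v w)"
  proof -
    have "sparse m v0" "sparse m w"
      using supp_v0 supp_w card sparse_if_supp_subset[of _ "I \<union> supp v"] by blast+
    then have "norm v0 * norm w \<le> norm (Phi *v v0) * norm (Phi *v w) / (1 - e)\<^sup>2"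
      by (rule RIC_norm_mult_le[OF ric e(2)])
    then have "ric_delta e * (norm v0 * norm w)
        \<le> ric_delta e * (norm (Phi *v v0) * norm (Phi *v w) / (1 - e)\<^sup>2)"
      using ric_delta_nonneg[OF e(1)] by (rule mult_left_mono)
    then show ?thesis
      by (simp add: mult_ac)
  qed
  finally have "(norm (Phi *v w))\<^sup>2 \<le> (ric_delta e / (1 - e)\<^sup>2 * norm (Phi *v v0)) * norm (Phi *v w)" .
  then show ?thesis
    unfolding diff by (rule le_if_square_le_mult) (use e ric_delta_nonneg[of e] in auto)
qed

lemma romp_identify_subset_supp:
  assumes "romp_identify n u J"
  shows "J \<subseteq> supp u"
proof (cases "card (supp u) \<le> n")
  case True
  then show ?thesis
    using assms unfolding romp_identify_def by simp
next
  case False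
  then have card_J: "card J = n" and top: "\<And>i j. i \<in> J \<Longrightarrow> j \<notin> J \<Longrightarrow> \<bar>u $ j\<bar> \<le> \<bar>u $ i\<bar>"
    using assms unfolding romp_identify_def by auto
  show ?thesis
  proof
    fix i
    assume i: "i \<in> J"
    show "i \<in> supp u"
    proof (rule ccontr)
      assume "i \<notin> supp u"
      then have "supp u \<subseteq> J - {i}"
        using top[OF i] by (auto simp: supp_def)
      then have "card (supp u) < card J"
        using card_Diff1_less[OF finite i] card_mono[OF finite] by (meson le_less_trans)
      then show False
        using False card_J by simp
    qed
  qed
qed

lemma romp_identify_card_le: "romp_identify n u J \<Longrightarrow> card J \<le> n"
  unfolding romp_identify_def by (auto split: if_splits)

lemma sum_le_sum_if_card_le:
  fixes f g :: "'a \<Rightarrow> real"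
  assumes "finite A" "finite B" "card A \<le> card B"
    and "\<And>a b. a \<in> A \<Longrightarrow> b \<in> B \<Longrightarrow> f a \<le> g b" and "\<And>b. b \<in> B \<Longrightarrow> 0 \<le> g b"
  shows "sum f A \<le> sum g B"
proof (cases "B = {}")
  case True
  then show ?thesis
    using assms by simp
next
  case False
  \<comment> \<open>average the pointwise bound over all pairs\<close>
  have "real (card B) * sum f A = (\<Sum>a\<in>A. \<Sum>b\<in>B. f a)"
    by (simp add: sum_distrib_right mult.commute)
  also have "\<dots> \<le> (\<Sum>a\<in>A. \<Sum>b\<in>B. g b)"
    by (intro sum_mono) (auto intro: assms(4))
  also have "\<dots> = real (card A) * sum g B"
    by simp
  also have "\<dots> \<le> real (card B) * sum g B"
    using assms(3,5) by (intro mult_right_mono) (auto intro: sum_nonneg)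
  finally show ?thesis
    using False assms(2) by (simp add: card_gt_0_iff)
qed

lemma romp_identify_max_energy:
  assumes "romp_identify n u J" "card T \<le> n"
  shows "(\<Sum>i\<in>T. (u $ i)\<^sup>2) \<le> (\<Sum>i\<in>J. (u $ i)\<^sup>2)"
proof (cases "card (supp u) \<le> n")
  case True
  then have "J = supp u"
    using assms(1) unfolding romp_identify_def by simp
  moreover have "(\<Sum>i\<in>T. (u $ i)\<^sup>2) = (\<Sum>i\<in>T \<inter> supp u. (u $ i)\<^sup>2)"
    by (rule sum.mono_neutral_right) (auto simp: supp_def)
  moreover have "(\<Sum>i\<in>T \<inter> supp u. (u $ i)\<^sup>2) \<le> (\<Sum>i\<in>supp u. (u $ i)\<^sup>2)"
    by (rule sum_mono2) auto
  ultimately show ?thesis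
    by simp
next
  case False
  then have "card J = n" and top: "\<And>i j. i \<in> J \<Longrightarrow> j \<notin> J \<Longrightarrow> \<bar>u $ j\<bar> \<le> \<bar>u $ i\<bar>"
    using assms(1) unfolding romp_identify_def by auto
  then have "card (T - J) \<le> card (J - T)"
    using assms(2) card_mono[of T "T \<inter> J"] by (simp add: card_Diff_subset_Int Int_commute)
  then have "(\<Sum>i\<in>T - J. (u $ i)\<^sup>2) \<le> (\<Sum>i\<in>J - T. (u $ i)\<^sup>2)"
    by (rule sum_le_sum_if_card_le[OF finite finite])
      (auto simp: abs_le_square_iff[symmetric] intro: top)
  moreover have "(\<Sum>i\<in>T. (u $ i)\<^sup>2) = (\<Sum>i\<in>T \<inter> J. (u $ i)\<^sup>2) + (\<Sum>i\<in>T - J. (u $ i)\<^sup>2)"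
    "(\<Sum>i\<in>J. (u $ i)\<^sup>2) = (\<Sum>i\<in>J \<inter> T. (u $ i)\<^sup>2) + (\<Sum>i\<in>J - T. (u $ i)\<^sup>2)"
    by (simp_all add: sum.Int_Diff)
  ultimately show ?thesis
    by (simp add: Int_commute)
qed

lemma comparable_energy_le:
  assumes "comparable u J0" "A \<subseteq> J0" "B \<subseteq> J0" "card A \<le> card B"
  shows "(\<Sum>i\<in>A. (u $ i)\<^sup>2) \<le> 4 * (\<Sum>i\<in>B. (u $ i)\<^sup>2)"
proof -
  have "(\<Sum>i\<in>A. (u $ i)\<^sup>2) \<le> (\<Sum>i\<in>B. 4 * (u $ i)\<^sup>2)"
  proof (rule sum_le_sum_if_card_le[OF finite finite assms(4)])
    fix a b
    assume "a \<in> A" "b \<in> B"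
    then have "\<bar>u $ a\<bar> \<le> \<bar>2 * u $ b\<bar>"
      using assms unfolding comparable_def by (auto simp: abs_mult)
    then show "(u $ a)\<^sup>2 \<le> 4 * (u $ b)\<^sup>2"
      by (simp add: abs_le_square_iff power_mult_distrib)
  qed simp
  then show ?thesis
    by (simp add: sum_distrib_left)
qed

lemma comparable_energy_le_Diff:
  assumes "comparable u J0" "card (J0 \<inter> S) \<le> card (J0 - S)"
  shows "(\<Sum>i\<in>J0. (u $ i)\<^sup>2) \<le> 5 * (\<Sum>i\<in>J0 - S. (u $ i)\<^sup>2)"
proof -
  have "(\<Sum>i\<in>J0 \<inter> S. (u $ i)\<^sup>2) \<le> 4 * (\<Sum>i\<in>J0 - S. (u $ i)\<^sup>2)"
    using assms by (intro comparable_energy_le) auto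
  moreover have "(\<Sum>i\<in>J0. (u $ i)\<^sup>2) = (\<Sum>i\<in>J0 \<inter> S. (u $ i)\<^sup>2) + (\<Sum>i\<in>J0 - S. (u $ i)\<^sup>2)"
    by (simp add: sum.Int_Diff)
  ultimately show ?thesis
    by linarith
qed

lemma romp_regularize_max_energy:
  assumes "romp_regularize u J J0" "C \<subseteq> J" "comparable u C"
  shows "(\<Sum>i\<in>C. (u $ i)\<^sup>2) \<le> (\<Sum>i\<in>J0. (u $ i)\<^sup>2)"
proof -
  have "norm (restrict_vec u C) \<le> norm (restrict_vec u J0)"
    using assms unfolding romp_regularize_def by blast
  then show ?thesis
    by (simp add: power_mono flip: norm_restrict_vec_sq)
qed

lemma le_div_pow2_or_dyadic_band:
  fixes x M :: real
  assumes "0 \<le> x" "x \<le> M"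
  shows "x \<le> M / 2 ^ K \<or> (\<exists>k<K. M / 2 ^ Suc k < x \<and> x \<le> M / 2 ^ k)"
proof (induction K)
  case 0
  then show ?case
    using assms by simp
next
  case (Suc K)
  then show ?case
  proof
    assume "x \<le> M / 2 ^ K"
    then show ?thesis
      by (cases "x \<le> M / 2 ^ Suc K") auto
  qed (auto intro: less_SucI)
qed

lemma sum_squares_le_dyadic_bands:
  fixes f :: "'a \<Rightarrow> real"
  assumes "finite J" "\<And>i. i \<in> J \<Longrightarrow> \<bar>f i\<bar> \<le> M"
  shows "(\<Sum>i\<in>J. (f i)\<^sup>2)
    \<le> (\<Sum>k<K. \<Sum>i\<in>{i\<in>J. M / 2 ^ Suc k < \<bar>f i\<bar> \<and> \<bar>f i\<bar> \<le> M / 2 ^ k}. (f i)\<^sup>2)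
       + card J * (M / 2 ^ K)\<^sup>2"
proof -
  define band where "band k i \<longleftrightarrow> M / 2 ^ Suc k < \<bar>f i\<bar> \<and> \<bar>f i\<bar> \<le> M / 2 ^ k" for k i
  define g where "g i = (\<Sum>k<K. if band k i then (f i)\<^sup>2 else 0)" for i
  have "(f i)\<^sup>2 \<le> g i + (M / 2 ^ K)\<^sup>2" if "i \<in> J" for i
  proof -
    have "0 \<le> g i"
      unfolding g_def by (intro sum_nonneg) auto
    from le_div_pow2_or_dyadic_band[OF abs_ge_zero assms(2)[OF that], of K]
    show ?thesis
    proof (elim disjE exE conjE)
      assume "\<bar>f i\<bar> \<le> M / 2 ^ K"
      then have "\<bar>f i\<bar>\<^sup>2 \<le> (M / 2 ^ K)\<^sup>2"
        by (intro power_mono) auto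
      then show ?thesis
        using \<open>0 \<le> g i\<close> by simp
    next
      fix k
      assume "k < K" "M / 2 ^ Suc k < \<bar>f i\<bar>" "\<bar>f i\<bar> \<le> M / 2 ^ k"
      then have "band k i"
        unfolding band_def by blast
      have "(if band k i then (f i)\<^sup>2 else 0) \<le> g i"
        unfolding g_def by (rule member_le_sum) (use \<open>k < K\<close> in auto)
      then have "(f i)\<^sup>2 \<le> g i"
        using \<open>band k i\<close> by simp
      then show ?thesis
        using zero_le_power2[of "M / 2 ^ K"] by linarith
    qed
  qed
  then have "(\<Sum>i\<in>J. (f i)\<^sup>2) \<le> (\<Sum>i\<in>J. g i + (M / 2 ^ K)\<^sup>2)"
    by (rule sum_mono)
  also have "\<dots> = (\<Sum>i\<in>J. g i) + card J * (M / 2 ^ K)\<^sup>2"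
    by (simp add: sum.distrib)
  also have "(\<Sum>i\<in>J. g i) = (\<Sum>k<K. \<Sum>i\<in>J. if band k i then (f i)\<^sup>2 else 0)"
    unfolding g_def by (rule sum.swap)
  also have "\<dots> = (\<Sum>k<K. \<Sum>i\<in>{i\<in>J. band k i}. (f i)\<^sup>2)"
    using assms(1) by (simp add: sum.inter_filter)
  finally show ?thesis
    unfolding band_def .
qed

lemma comparable_dyadic_band:
  "comparable u {i\<in>J. M / 2 ^ Suc k < \<bar>u $ i\<bar> \<and> \<bar>u $ i\<bar> \<le> M / 2 ^ k}"
  unfolding comparable_def
proof (intro ballI)
  fix i j
  assume "i \<in> {i\<in>J. M / 2 ^ Suc k < \<bar>u $ i\<bar> \<and> \<bar>u $ i\<bar> \<le> M / 2 ^ k}"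
    "j \<in> {i\<in>J. M / 2 ^ Suc k < \<bar>u $ i\<bar> \<and> \<bar>u $ i\<bar> \<le> M / 2 ^ k}"
  then have "\<bar>u $ i\<bar> \<le> M / 2 ^ k" "M / 2 ^ Suc k < \<bar>u $ j\<bar>"
    by blast+
  moreover have "M / 2 ^ k = 2 * (M / 2 ^ Suc k)"
    by simp
  ultimately show "\<bar>u $ i\<bar> \<le> 2 * \<bar>u $ j\<bar>"
    by linarith
qed

lemma of_nat_mult_sq_div_pow2_le:
  fixes M :: real
  assumes "c < 2 ^ K"
  shows "real c * (M / 2 ^ K)\<^sup>2 \<le> M\<^sup>2"
proof -
  have "real c < real (2 ^ K)"
    using assms by (simp only: of_nat_less_iff)
  then have "real c \<le> 2 ^ K"
    by simp
  also have "(2::real) ^ K \<le> (2 ^ K)\<^sup>2"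
    using power_increasing[of 1 2 "(2::real) ^ K"] by simp
  finally have "real c / (2 ^ K)\<^sup>2 \<le> 1"
    by simp
  then have "real c / (2 ^ K)\<^sup>2 * M\<^sup>2 \<le> 1 * M\<^sup>2"
    by (rule mult_right_mono) simp
  then show ?thesis
    by (simp add: power_divide)
qed

text \<open>The regularization step keeps a logarithmic fraction of the energy of \<open>J\<close>: the dyadic
  bands of \<open>\<bar>u $ i\<bar>\<close> below the maximum \<open>M\<close> are comparable sets, so each carries at most the
  energy of \<open>J0\<close>, and the coordinates below the last band carry at most \<open>M\<^sup>2\<close> in total.\<close>
lemma romp_regularize_energy:
  assumes reg: "romp_regularize u J J0"
  shows "(\<Sum>i\<in>J. (u $ i)\<^sup>2) \<le> (floor_log (card J) + 2) * (\<Sum>i\<in>J0. (u $ i)\<^sup>2)"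
proof (cases "J = {}")
  case True
  then show ?thesis
    by (simp add: sum_nonneg)
next
  case False
  define Q where "Q = (\<Sum>i\<in>J0. (u $ i)\<^sup>2)"
  define M where "M = Max ((\<lambda>i. \<bar>u $ i\<bar>) ` J)"
  define K where "K = Suc (floor_log (card J))"
  have M: "\<And>i. i \<in> J \<Longrightarrow> \<bar>u $ i\<bar> \<le> M"
    unfolding M_def by (intro Max_ge) auto
  have "M \<in> (\<lambda>i. \<bar>u $ i\<bar>) ` J"
    unfolding M_def using False by (intro Max_in) auto
  then obtain i0 where i0: "i0 \<in> J" "\<bar>u $ i0\<bar> = M"
    by auto
  have "(u $ i0)\<^sup>2 \<le> Q"
    using romp_regularize_max_energy[OF reg, of "{i0}"] i0 unfolding Q_def
    by (simp add: comparable_def)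
  moreover have "M\<^sup>2 = (u $ i0)\<^sup>2"
    using i0(2) power2_abs[of "u $ i0"] by simp
  moreover have "real (card J) * (M / 2 ^ K)\<^sup>2 \<le> M\<^sup>2"
    using floor_log_exp2_gt[of "card J"] unfolding K_def by (intro of_nat_mult_sq_div_pow2_le) simp
  ultimately have tail: "real (card J) * (M / 2 ^ K)\<^sup>2 \<le> Q"
    by linarith
  have "(\<Sum>i\<in>J. (u $ i)\<^sup>2)
    \<le> (\<Sum>k<K. \<Sum>i\<in>{i\<in>J. M / 2 ^ Suc k < \<bar>u $ i\<bar> \<and> \<bar>u $ i\<bar> \<le> M / 2 ^ k}. (u $ i)\<^sup>2)
       + card J * (M / 2 ^ K)\<^sup>2"
    using M by (intro sum_squares_le_dyadic_bands) auto
  also have "\<dots> \<le> (\<Sum>k<K. Q) + Q"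
    using romp_regularize_max_energy[OF reg _ comparable_dyadic_band] tail unfolding Q_def
    by (intro add_mono sum_mono) auto
  also have "\<dots> = (floor_log (card J) + 2) * Q"
    by (simp add: K_def algebra_simps)
  finally show ?thesis
    unfolding Q_def .
qed

lemma romp_regularize_disjoint:
  assumes "is_lsq_residual Phi x I r"
    and "romp_identify n (transpose Phi *v r) J" "romp_regularize (transpose Phi *v r) J J0"
  shows "J0 \<inter> I = {}"
proof -
  have "J0 \<subseteq> supp (transpose Phi *v r)"
    using assms(2,3) romp_identify_subset_supp unfolding romp_regularize_def by blast
  then show ?thesis
    using is_lsq_residual_correlation_vanishes[OF assms(1)] by (auto simp: supp_def)
qed

lemma correlation_residual_error:
  assumes ric: "RIC Phi (2 * n) e" and e: "0 \<le> e" "e < 1"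
    and res: "is_lsq_residual Phi (Phi *v v) I r"
    and card: "card (I \<union> supp v) \<le> 2 * n" "card (supp v) \<le> n" "card T \<le> n"
  defines "v0 \<equiv> restrict_vec v (supp v - I)"
  shows "norm (restrict_vec (transpose Phi *v (Phi *v v0 - r)) T)
    \<le> ric_delta e * ((1 + e) / (1 - e))\<^sup>2 * norm v0"
proof -
  have "supp v0 \<subseteq> supp v"
    using supp_restrict_vec unfolding v0_def by blast
  then have "sparse (2 * n) v0"
    by (rule sparse_if_supp_subset) (use card(2) in simp)
  then have "norm (Phi *v v0) \<le> (1 + e) * norm v0"
    using ric unfolding RIC_def by blast
  moreover have "norm (Phi *v v0 - r) \<le> ric_delta e / (1 - e)\<^sup>2 * norm (Phi *v v0)"
    using residual_approx[OF ric e res card(1)] by (simp add: v0_def)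
  moreover have "0 \<le> ric_delta e / (1 - e)\<^sup>2"
    using ric_delta_nonneg[OF e(1)] by simp
  ultimately have "norm (Phi *v v0 - r) \<le> ric_delta e / (1 - e)\<^sup>2 * ((1 + e) * norm v0)"
    using mult_left_mono order_trans by blast
  then have "(1 + e) * norm (Phi *v v0 - r) \<le> (1 + e) * (ric_delta e / (1 - e)\<^sup>2 * ((1 + e) * norm v0))"
    using e(1) by (intro mult_left_mono) auto
  moreover have "norm (restrict_vec (transpose Phi *v (Phi *v v0 - r)) T) \<le> (1 + e) * norm (Phi *v v0 - r)"
    using card(3) by (intro RIC_restrict_transpose[OF ric e(1)]) simp
  ultimately have "norm (restrict_vec (transpose Phi *v (Phi *v v0 - r)) T)
      \<le> (1 + e) * (ric_delta e / (1 - e)\<^sup>2 * ((1 + e) * norm v0))"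
    by linarith
  also have "\<dots> = ric_delta e * ((1 + e) / (1 - e))\<^sup>2 * norm v0"
    by (simp add: power_divide power2_eq_square)
  finally show ?thesis .
qed

definition correlation_error :: "real \<Rightarrow> real" where
  "correlation_error e = ric_delta e * (1 + ((1 + e) / (1 - e))\<^sup>2)"

text \<open>On at most \<open>n\<close> coordinates \<open>\<Phi>\<^sup>* r\<close> is close to \<open>v0\<close>, because \<open>r\<close> is close to \<open>\<Phi> v0\<close>
  and \<open>\<Phi>\<^sup>* \<Phi>\<close> is close to the identity on sparse vectors.\<close>
lemma correlation_approx:
  assumes ric: "RIC Phi (2 * n) e" and e: "0 \<le> e" "e < 1"
    and res: "is_lsq_residual Phi (Phi *v v) I r"
    and card: "card (I \<union> supp v) \<le> 2 * n" "card (supp v) \<le> n" "card T \<le> n"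
  defines "v0 \<equiv> restrict_vec v (supp v - I)"
  shows "norm (restrict_vec (transpose Phi *v r) T - restrict_vec v0 T) \<le> correlation_error e * norm v0"
proof -
  have "supp v0 \<subseteq> supp v"
    using supp_restrict_vec unfolding v0_def by blast
  then have "card (supp v0) \<le> n"
    using card_mono[OF finite, of "supp v0" "supp v"] card(2) by linarith
  then have card_T: "card (T \<union> supp v0) \<le> 2 * n"
    using card_Un_le[of T "supp v0"] card(3) by linarith
  have "restrict_vec (transpose Phi *v r) T - restrict_vec v0 T
      = restrict_vec (transpose Phi *v (Phi *v v0) - v0) T - restrict_vec (transpose Phi *v (Phi *v v0 - r)) T"
    by (simp add: vec_eq_iff vector_matrix_mult_diff_distrib)
  then have "norm (restrict_vec (transpose Phi *v r) T - restrict_vec v0 T)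
      \<le> norm (restrict_vec (transpose Phi *v (Phi *v v0) - v0) T)
        + norm (restrict_vec (transpose Phi *v (Phi *v v0 - r)) T)"
    by (simp add: norm_triangle_ineq4)
  also have "\<dots> \<le> ric_delta e * norm v0 + ric_delta e * ((1 + e) / (1 - e))\<^sup>2 * norm v0"
  proof (rule add_mono)
    show "norm (restrict_vec (transpose Phi *v (Phi *v v0) - v0) T) \<le> ric_delta e * norm v0"
      using RIC_restrict_gram[OF ric e(1) less_imp_le[OF e(2)] card_T] .
    show "norm (restrict_vec (transpose Phi *v (Phi *v v0 - r)) T)
        \<le> ric_delta e * ((1 + e) / (1 - e))\<^sup>2 * norm v0"
      using correlation_residual_error[OF ric e res card] unfolding v0_def .
  qed
  also have "\<dots> = correlation_error e * norm v0"
    by (simp add: correlation_error_def algebra_simps)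
  finally show ?thesis .
qed

lemma correlation_energy_off_support:
  assumes ric: "RIC Phi (2 * n) e" and e: "0 \<le> e" "e < 1"
    and res: "is_lsq_residual Phi (Phi *v v) I r"
    and card: "card (I \<union> supp v) \<le> 2 * n" "card (supp v) \<le> n" "card B \<le> n"
    and off: "B \<inter> supp v = {}"
  shows "(\<Sum>i\<in>B. ((transpose Phi *v r) $ i)\<^sup>2)
    \<le> (correlation_error e * norm (restrict_vec v (supp v - I)))\<^sup>2"
proof -
  have "restrict_vec (restrict_vec v (supp v - I)) B = 0"
    using off by (auto simp: vec_eq_iff supp_def)
  then have "norm (restrict_vec (transpose Phi *v r) B) \<le> correlation_error e * norm (restrict_vec v (supp v - I))"
    using correlation_approx[OF ric e res card] by simp
  then have "(norm (restrict_vec (transpose Phi *v r) B))\<^sup>2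
      \<le> (correlation_error e * norm (restrict_vec v (supp v - I)))\<^sup>2"
    by (rule power_mono) simp
  then show ?thesis
    by (simp add: norm_restrict_vec_sq)
qed

lemma correlation_energy_on_support:
  assumes ric: "RIC Phi (2 * n) e" and e: "0 \<le> e" "e < 1" "correlation_error e \<le> 1"
    and res: "is_lsq_residual Phi (Phi *v v) I r"
    and card: "card (I \<union> supp v) \<le> 2 * n" "card (supp v) \<le> n"
  defines "v0 \<equiv> restrict_vec v (supp v - I)"
  shows "((1 - correlation_error e) * norm v0)\<^sup>2 \<le> (\<Sum>i\<in>supp v - I. ((transpose Phi *v r) $ i)\<^sup>2)"
proof -
  define u where "u = restrict_vec (transpose Phi *v r) (supp v - I)"
  have "card (supp v - I) \<le> n"
    using card(2) card_mono[OF finite Diff_subset, of "supp v" I] by linarith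
  from correlation_approx[OF ric e(1,2) res card this]
  have "norm (u - restrict_vec v0 (supp v - I)) \<le> correlation_error e * norm v0"
    unfolding u_def v0_def .
  moreover have "restrict_vec v0 (supp v - I) = v0"
    by (simp add: vec_eq_iff v0_def)
  ultimately have "norm (u - v0) \<le> correlation_error e * norm v0"
    by simp
  moreover have "norm v0 \<le> norm u + norm (u - v0)"
    using norm_triangle_sub[of v0 u] by (simp add: norm_minus_commute)
  ultimately have "(1 - correlation_error e) * norm v0 \<le> norm u"
    by (simp add: left_diff_distrib)
  then have "((1 - correlation_error e) * norm v0)\<^sup>2 \<le> (norm u)\<^sup>2"
    using e(3) by (intro power_mono) auto
  then show ?thesis
    by (simp add: u_def norm_restrict_vec_sq)
qed

text \<open>If at least half of \<open>J0\<close> lay outside \<open>supp v\<close>, then \<open>J0\<close> would carry little of the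
  energy of \<open>\<Phi>\<^sup>* r\<close>, while \<open>J\<close> carries at least that of \<open>supp v - I\<close>, which is close to
  \<open>\<parallel>v0\<parallel>\<^sup>2\<close>; the regularization bound relates the two energies.\<close>
lemma romp_selection_energy_bound:
  assumes ric: "RIC Phi (2 * n) e" and e: "0 \<le> e" "e < 1" "correlation_error e \<le> 1"
    and res: "is_lsq_residual Phi (Phi *v v) I r" and "r \<noteq> 0"
    and card: "card (I \<union> supp v) \<le> 2 * n" "card (supp v) \<le> n"
    and ident: "romp_identify n (transpose Phi *v r) J"
    and reg: "romp_regularize (transpose Phi *v r) J J0"
    and more_outside: "card (J0 \<inter> supp v) \<le> card (J0 - supp v)"
  shows "(1 - correlation_error e)\<^sup>2 \<le> 5 * (floor_log n + 2) * (correlation_error e)\<^sup>2"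
proof -
  define u where "u = transpose Phi *v r"
  define v0 where "v0 = restrict_vec v (supp v - I)"
  define \<kappa> where "\<kappa> = correlation_error e"
  have "norm (Phi *v v0 - r) \<le> ric_delta e / (1 - e)\<^sup>2 * norm (Phi *v v0)"
    using residual_approx[OF ric e(1,2) res card(1)] unfolding v0_def .
  then have "v0 \<noteq> 0"
    using \<open>r \<noteq> 0\<close> by auto
  have card_J: "card J \<le> n"
    using romp_identify_card_le[OF ident] .
  have "J0 \<subseteq> J"
    using reg unfolding romp_regularize_def by blast
  then have "card (J0 - supp v) \<le> card J"
    by (intro card_mono) auto
  then have "card (J0 - supp v) \<le> n"
    using card_J by linarith
  moreover have "(J0 - supp v) \<inter> supp v = {}"
    by blast
  ultimately have "(\<Sum>i\<in>J0 - supp v. (u $ i)\<^sup>2) \<le> (\<kappa> * norm v0)\<^sup>2"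
    unfolding u_def v0_def \<kappa>_def by (rule correlation_energy_off_support[OF ric e(1,2) res card])
  moreover have "(\<Sum>i\<in>J0. (u $ i)\<^sup>2) \<le> 5 * (\<Sum>i\<in>J0 - supp v. (u $ i)\<^sup>2)"
    using reg more_outside unfolding romp_regularize_def u_def by (intro comparable_energy_le_Diff) auto
  ultimately have energy_J0: "(\<Sum>i\<in>J0. (u $ i)\<^sup>2) \<le> 5 * (\<kappa> * norm v0)\<^sup>2"
    by linarith
  have "((1 - \<kappa>) * norm v0)\<^sup>2 \<le> (\<Sum>i\<in>supp v - I. (u $ i)\<^sup>2)"
    using correlation_energy_on_support[OF ric e res card] unfolding u_def v0_def \<kappa>_def .
  also have "\<dots> \<le> (\<Sum>i\<in>J. (u $ i)\<^sup>2)"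
  proof -
    have "card (supp v - I) \<le> n"
      using card(2) card_mono[OF finite Diff_subset, of "supp v" I] by linarith
    then show ?thesis
      unfolding u_def by (rule romp_identify_max_energy[OF ident])
  qed
  also have "\<dots> \<le> (floor_log (card J) + 2) * (\<Sum>i\<in>J0. (u $ i)\<^sup>2)"
    using romp_regularize_energy reg unfolding u_def by blast
  also have "\<dots> \<le> (floor_log n + 2) * (5 * (\<kappa> * norm v0)\<^sup>2)"
    using energy_J0 floor_log_le_iff[OF card_J] by (intro mult_mono) (auto simp: sum_nonneg)
  also have "\<dots> = (5 * (floor_log n + 2) * \<kappa>\<^sup>2) * (norm v0)\<^sup>2"
    by (simp add: power_mult_distrib algebra_simps)
  finally have "(1 - \<kappa>)\<^sup>2 * (norm v0)\<^sup>2 \<le> (5 * (floor_log n + 2) * \<kappa>\<^sup>2) * (norm v0)\<^sup>2"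
    by (simp only: power_mult_distrib)
  moreover have "0 < (norm v0)\<^sup>2"
    using \<open>v0 \<noteq> 0\<close> by simp
  ultimately show ?thesis
    unfolding \<kappa>_def by (rule mult_right_le_imp_le)
qed

lemma floor_log_mult_ln2_le: "real (floor_log n) * ln 2 \<le> ln (real n)"
proof (cases "n = 0")
  case False
  then have "real (2 ^ floor_log n) \<le> real n"
    using floor_log_exp2_le[of n] by (simp only: of_nat_le_iff)
  then have "ln ((2::real) ^ floor_log n) \<le> ln (real n)"
    using False by simp
  then show ?thesis
    by (simp add: ln_realpow)
qed simp

lemma correlation_error_le: "0 \<le> e \<Longrightarrow> e \<le> 37/1000 \<Longrightarrow> correlation_error e \<le> 22/5 * e"
proof -
  assume e: "0 \<le> e" "e \<le> 37/1000"
  then have "(1 + e) / (1 - e) \<le> 1077/1000"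
    by (simp add: divide_le_eq)
  then have "((1 + e) / (1 - e))\<^sup>2 \<le> (1077/1000)\<^sup>2"
    using e by (intro power_mono) auto
  also have "\<dots> \<le> 29/25"
    by (simp add: power2_eq_square)
  finally have "((1 + e) / (1 - e))\<^sup>2 \<le> 29/25" .
  moreover have "e * e \<le> 37/1000 * e"
    using e by (intro mult_right_mono) auto
  then have "ric_delta e \<le> 2037/1000 * e"
    by (simp add: ric_delta_def power2_eq_square)
  ultimately have "correlation_error e \<le> 2037/1000 * e * (1 + 29/25)"
    unfolding correlation_error_def using e ric_delta_nonneg[of e]
    by (intro mult_mono) auto
  then show ?thesis
    using e(1) by simp
qed

lemma romp_selection_numerics:
  assumes e: "0 \<le> e" "e \<le> 37/1000" "e\<^sup>2 * ln (real n) \<le> 9/10000"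
  shows "correlation_error e \<le> 1"
    and "5 * (floor_log n + 2) * (correlation_error e)\<^sup>2 < (1 - correlation_error e)\<^sup>2"
proof -
  define \<kappa> where "\<kappa> = correlation_error e"
  have \<kappa>: "0 \<le> \<kappa>" "\<kappa> \<le> 22/5 * e"
    using correlation_error_le[OF e(1,2)] e(1) ric_delta_nonneg[of e]
    unfolding \<kappa>_def correlation_error_def by auto
  then show "correlation_error e \<le> 1"
    using e(2) by (simp add: \<kappa>_def)
  have "real (floor_log n) * (2/3) \<le> ln (real n)"
    using floor_log_mult_ln2_le[of n] mult_left_mono[OF ln2_ge_two_thirds, of "real (floor_log n)"]
    by linarith
  then have "real (floor_log n) \<le> 3/2 * ln (real n)"
    by linarith
  then have "real (floor_log n) * e\<^sup>2 \<le> (3/2 * ln (real n)) * e\<^sup>2"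
    by (rule mult_right_mono) simp
  then have "real (floor_log n) * e\<^sup>2 \<le> 3/2 * (e\<^sup>2 * ln (real n))"
    by (simp add: mult_ac)
  moreover have "e\<^sup>2 \<le> (37/1000)\<^sup>2"
    using e by (intro power_mono) auto
  moreover have "(floor_log n + 2) * e\<^sup>2 = real (floor_log n) * e\<^sup>2 + 2 * e\<^sup>2"
    by (simp add: algebra_simps)
  ultimately have energy: "(floor_log n + 2) * e\<^sup>2 \<le> 41/10000"
    using e(3) by (simp add: power2_eq_square)
  have "\<kappa>\<^sup>2 \<le> 484/25 * e\<^sup>2"
    using power_mono[OF \<kappa>(2) \<kappa>(1), of 2] by (simp add: power_mult_distrib power_divide)
  then have "5 * (floor_log n + 2) * \<kappa>\<^sup>2 \<le> 5 * (floor_log n + 2) * (484/25 * e\<^sup>2)"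
    by (intro mult_left_mono) auto
  also have "\<dots> = 484/5 * ((floor_log n + 2) * e\<^sup>2)"
    by simp
  also have "\<dots> \<le> 484/5 * (41/10000)"
    using energy by (rule mult_left_mono) simp
  also have "\<dots> < (1 - 22/5 * 37/1000)\<^sup>2"
    by (simp add: power2_eq_square)
  also have "\<dots> \<le> (1 - \<kappa>)\<^sup>2"
    using \<kappa> e by (intro power_mono) auto
  finally show "5 * (floor_log n + 2) * (correlation_error e)\<^sup>2 < (1 - correlation_error e)\<^sup>2"
    by (simp add: \<kappa>_def)
qed

lemma romp_step_selection:
  assumes ric: "RIC Phi (2 * n) e" and e: "0 \<le> e" "e \<le> 37/1000" "e\<^sup>2 * ln (real n) \<le> 9/10000"
    and res: "is_lsq_residual Phi (Phi *v v) I r" and "r \<noteq> 0"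
    and card: "card (I \<union> supp v) \<le> 2 * n" "card (supp v) \<le> n"
    and ident: "romp_identify n (transpose Phi *v r) J"
    and reg: "romp_regularize (transpose Phi *v r) J J0"
  shows "J0 \<inter> I = {}" and "card (J0 - supp v) \<le> card (J0 \<inter> supp v)"
proof -
  show "J0 \<inter> I = {}"
    by (rule romp_regularize_disjoint[OF res ident reg])
  show "card (J0 - supp v) \<le> card (J0 \<inter> supp v)"
  proof (rule ccontr)
    assume "\<not> card (J0 - supp v) \<le> card (J0 \<inter> supp v)"
    then have "(1 - correlation_error e)\<^sup>2 \<le> 5 * (floor_log n + 2) * (correlation_error e)\<^sup>2"
      using e romp_selection_numerics(1)[OF e]
      by (intro romp_selection_energy_bound[OF ric _ _ _ res \<open>r \<noteq> 0\<close> card ident reg]) auto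
    then show False
      using romp_selection_numerics(2)[OF e] by simp
  qed
qed

lemma card_Un_le_double:
  assumes "finite I" "finite S" "card (I - S) \<le> card (I \<inter> S)" "card S \<le> n"
  shows "card (I \<union> S) \<le> 2 * n"
proof -
  have "card (I \<union> S) = card ((I - S) \<union> S)"
    by (simp add: Un_Diff_cancel2)
  also have "\<dots> = card (I - S) + card S"
    using assms(1,2) by (intro card_Un_disjoint) auto
  finally have "card (I \<union> S) = card (I - S) + card S" .
  moreover have "card (I \<inter> S) \<le> card S"
    using assms(2) by (simp add: card_mono)
  ultimately show ?thesis
    using assms(3,4) by linarith
qed

lemma romp_state_support_invariant:
  assumes ric: "RIC Phi (2 * n) e" and e: "0 \<le> e" "e \<le> 37/1000" "e\<^sup>2 * ln (real n) \<le> 9/10000"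
    and card: "card (supp v) \<le> n"
    and "romp_state Phi (Phi *v v) n I r"
  shows "card (I - supp v) \<le> card (I \<inter> supp v)"
  using assms(6)
proof (induction rule: romp_state.induct)
  case init
  show ?case
    by simp
next
  case (step I r J J0 y)
  have "card (I \<union> supp v) \<le> 2 * n"
    using card_Un_le_double[OF finite finite step.IH card] .
  from romp_step_selection[OF ric e romp_state_residual[OF step.hyps(1)] step.hyps(2) this card
      step.hyps(3,4)]
  have "J0 \<inter> I = {}" "card (J0 - supp v) \<le> card (J0 \<inter> supp v)" .
  moreover have "(I \<union> J0) - supp v = (I - supp v) \<union> (J0 - supp v)"
    "(I \<union> J0) \<inter> supp v = (I \<inter> supp v) \<union> (J0 \<inter> supp v)"
    by blast+
  moreover have "card ((I - supp v) \<union> (J0 - supp v)) = card (I - supp v) + card (J0 - supp v)"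
    "card ((I \<inter> supp v) \<union> (J0 \<inter> supp v)) = card (I \<inter> supp v) + card (J0 \<inter> supp v)"
    using \<open>J0 \<inter> I = {}\<close> by (auto intro!: card_Un_disjoint)
  ultimately show ?case
    using step.IH by simp
qed

text \<open>For \<open>n \<le> 1\<close> we have \<open>ln n = 0\<close>, and division by zero makes \<open>\<epsilon> = 0\<close>.\<close>
lemma romp_eps_bounds:
  assumes "e = 0.03 / sqrt (ln (real n))"
  shows "0 \<le> e" "e \<le> 37/1000" "e\<^sup>2 * ln (real n) \<le> 9/10000"
proof -
  consider "n < 2" | "2 \<le> n"
    by linarith
  then have "0 \<le> e \<and> e \<le> 37/1000 \<and> e\<^sup>2 * ln (real n) \<le> 9/10000"
  proof cases
    case 1
    then have "ln (real n) = 0"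
      by (cases n) auto
    then show ?thesis
      using assms by simp
  next
    case 2
    then have "ln 2 \<le> ln (real n)"
      by simp
    then have L: "2/3 \<le> ln (real n)"
      using ln2_ge_two_thirds by linarith
    then have "(sqrt (ln (real n)))\<^sup>2 = ln (real n)"
      by simp
    then have "e\<^sup>2 * ln (real n) = 9/10000"
      using assms L by (simp add: power_divide)
    moreover have "e\<^sup>2 * (2/3) \<le> e\<^sup>2 * ln (real n)"
      using L by (intro mult_left_mono) auto
    ultimately have "e\<^sup>2 \<le> 1369 / 1000000"
      by linarith
    then have "e\<^sup>2 \<le> (37/1000)\<^sup>2"
      by (simp add: power2_eq_square)
    then show ?thesis
      using assms L power2_le_imp_le[of e "37/1000"] \<open>e\<^sup>2 * ln (real n) = 9/10000\<close> by simp
  qed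
  then show "0 \<le> e" "e \<le> 37/1000" "e\<^sup>2 * ln (real n) \<le> 9/10000"
    by auto
qed

lemma ric_delta_div_le: "0 \<le> e \<Longrightarrow> e \<le> 37/1000 \<Longrightarrow> ric_delta e / (1 - e)\<^sup>2 \<le> 2.2 * e"
proof -
  assume e: "0 \<le> e" "e \<le> 37/1000"
  have "11/5 * (1 - e)\<^sup>2 = 11/5 - 22/5 * e + 11/5 * e\<^sup>2"
    by (simp add: power2_eq_square algebra_simps)
  then have "2 + e \<le> 11/5 * (1 - e)\<^sup>2"
    using e zero_le_power2[of e] by linarith
  then have "e * (2 + e) \<le> e * (11/5 * (1 - e)\<^sup>2)"
    using e(1) by (rule mult_left_mono)
  then have "ric_delta e \<le> 11/5 * e * (1 - e)\<^sup>2"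
    by (simp add: ric_delta_def power2_eq_square algebra_simps)
  then show ?thesis
    using e by (simp add: divide_le_eq)
qed

theorem lemma3p4:
  fixes Phi :: "real ^ 'd ^ 'N" and v :: "real ^ 'd" and n :: nat
    and eps :: real and I :: "'d set" and r :: "real ^ 'N"
  assumes "eps = 0.03 / sqrt (ln (real n))"
    and "RIC Phi (2 * n) eps"
    and "v \<noteq> 0" and "sparse n v"
    and "romp_state Phi (Phi *v v) n I r"
    and "r \<noteq> 0"
  shows "norm (Phi *v restrict_vec v (supp v - I) - r)
           \<le> 2.2 * eps * norm (Phi *v restrict_vec v (supp v - I))"
proof -
  note eps = romp_eps_bounds[OF assms(1)]
  have card: "card (supp v) \<le> n"
    using assms(4) unfolding sparse_def .
  have "card (I \<union> supp v) \<le> 2 * n"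
    using romp_state_support_invariant[OF assms(2) eps card assms(5)] card
    by (intro card_Un_le_double) auto
  then have "norm (Phi *v restrict_vec v (supp v - I) - r)
      \<le> ric_delta eps / (1 - eps)\<^sup>2 * norm (Phi *v restrict_vec v (supp v - I))"
    using eps by (intro residual_approx[OF assms(2) _ _ romp_state_residual[OF assms(5)]]) auto
  also have "\<dots> \<le> 2.2 * eps * norm (Phi *v restrict_vec v (supp v - I))"
    using ric_delta_div_le[OF eps(1,2)] by (intro mult_right_mono) auto
  finally show ?thesis .
qed

end
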